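(* For every $M\geq 1$, $$h(M)=\sum_{0\leq 2j\leq M-1}(j+1)\binom{M-j-1}{j}.$$
   Context: The perimeter of a nonempty partition $\lambda$ with largest part $\lambda_1$ and $\ell(\lambda)$ parts is $\lambda_1+\ell(\lambda)-1$. $h(M)$ is the total number of parts, summed over all partitions into distinct parts with perimeter $M$. *)

theory Defs
  imports Main
begin

text \<open>A partition into distinct parts is represented by its (finite, nonempty) set of parts,
  all positive integers. Largest part = Max, number of parts = card.\<close>

definition distinct_partitions :: "nat set set" where
  "distinct_partitions = {S. finite S \<and> S \<noteq> {} \<and> 0 \<notin> S}"

definition perimeter :: "nat set \<Rightarrow> nat" where
  "perimeter S = Max S + card S - 1"

definition h :: "nat \<Rightarrow> nat" where
  "h M = (\<Sum>S\<in>{S\<in>distinct_partitions. perimeter S = M}. card S)"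

end

theory Submission
  imports Defs
begin

text \<open>A partition into distinct parts with \<open>j + 1\<close> parts and perimeter \<open>M\<close> has largest part
  \<open>M - j\<close>, so it is the part \<open>M - j\<close> together with an arbitrary \<open>j\<close>-subset of \<open>{1..<M - j}\<close>:
  there are \<open>(M - j - 1) choose j\<close> of them, each contributing \<open>j + 1\<close> parts. Since the \<open>j + 1\<close>
  distinct positive parts are at most the largest part, \<open>2 j \<le> M - 1\<close>.\<close>

definition subsets_with_max :: "nat \<Rightarrow> nat \<Rightarrow> nat set set" where
  "subsets_with_max n k = {S. S \<subseteq> {1..n} \<and> n \<in> S \<and> card S = k}"

lemma card_subsets_with_max:
  assumes "n \<ge> 1"
  shows "card (subsets_with_max n (Suc k)) = (n - 1) choose k"
proof -
  let ?T = "{T. T \<subseteq> {1..<n} \<and> card T = k}"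
  have "subsets_with_max n (Suc k) = insert n ` ?T"
  proof (intro set_eqI iffI)
    fix S assume S: "S \<in> subsets_with_max n (Suc k)"
    then have "finite S" unfolding subsets_with_max_def by (auto intro: finite_subset)
    with S have "S - {n} \<in> ?T" and "S = insert n (S - {n})"
      unfolding subsets_with_max_def by auto
    then show "S \<in> insert n ` ?T" by blast
  next
    fix S assume "S \<in> insert n ` ?T"
    then obtain T where T: "T \<subseteq> {1..<n}" "card T = k" "S = insert n T" by blast
    moreover have "finite T" "n \<notin> T" using T(1) by (auto intro: finite_subset)
    ultimately show "S \<in> subsets_with_max n (Suc k)"
      unfolding subsets_with_max_def using assms by auto
  qed
  moreover have "inj_on (insert n) ?T"
    by (rule inj_onI) (metis Diff_insert_absorb atLeastLessThan_iff less_irrefl mem_Collect_eq subsetD)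
  ultimately have "card (subsets_with_max n (Suc k)) = card ?T"
    by (simp add: card_image)
  also have "\<dots> = (n - 1) choose k"
    by (simp add: n_subsets)
  finally show ?thesis .
qed

lemma distinct_partition_subset_Max:
  assumes "S \<in> distinct_partitions"
  shows "S \<subseteq> {1..Max S}"
  using assms unfolding distinct_partitions_def by (auto simp: Suc_le_eq)

lemma distinct_partition_card_le_Max:
  assumes "S \<in> distinct_partitions"
  shows "card S \<le> Max S"
  using card_mono[OF _ distinct_partition_subset_Max[OF assms]] by simp

lemma distinct_partition_card_pos:
  assumes "S \<in> distinct_partitions"
  shows "card S \<ge> 1"
  using assms unfolding distinct_partitions_def by (simp add: Suc_le_eq card_gt_0_iff)

lemma finite_distinct_partitions_perimeter:
  "finite {S \<in> distinct_partitions. perimeter S = M}"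
proof (rule finite_subset)
  show "{S \<in> distinct_partitions. perimeter S = M} \<subseteq> Pow {..M}"
  proof
    fix S assume S: "S \<in> {S \<in> distinct_partitions. perimeter S = M}"
    then have "Max S \<le> M"
      using distinct_partition_card_pos[of S] unfolding perimeter_def by auto
    with S show "S \<in> Pow {..M}"
      unfolding distinct_partitions_def by (auto dest: Max_ge)
  qed
qed simp

lemma distinct_partitions_perimeter_card_eq:
  assumes "j < M"
  shows "{S \<in> distinct_partitions. perimeter S = M \<and> card S = Suc j} = subsets_with_max (M - j) (Suc j)"
proof (intro set_eqI iffI)
  fix S assume S: "S \<in> {S \<in> distinct_partitions. perimeter S = M \<and> card S = Suc j}"
  then have "Max S = M - j" unfolding perimeter_def by auto
  moreover have "Max S \<in> S" using S unfolding distinct_partitions_def by auto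
  ultimately show "S \<in> subsets_with_max (M - j) (Suc j)"
    using S distinct_partition_subset_Max[of S] unfolding subsets_with_max_def by auto
next
  fix S assume "S \<in> subsets_with_max (M - j) (Suc j)"
  then have sub: "S \<subseteq> {1..M - j}" and mem: "M - j \<in> S" and c: "card S = Suc j"
    unfolding subsets_with_max_def by auto
  have fin: "finite S" using sub by (auto intro: finite_subset)
  have "Max S = M - j" using fin mem sub by (intro Max_eqI) auto
  with assms c have "perimeter S = M" unfolding perimeter_def by simp
  with fin mem sub c show "S \<in> {S \<in> distinct_partitions. perimeter S = M \<and> card S = Suc j}"
    unfolding distinct_partitions_def by auto
qed

theorem mainTheorem9:
  fixes M :: nat
  assumes "M \<ge> 1"
  shows "h M = (\<Sum>j | 2 * j \<le> M - 1. (j + 1) * ((M - j - 1) choose j))"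
proof -
  let ?A = "{S \<in> distinct_partitions. perimeter S = M}"
  let ?J = "{j. 2 * j \<le> M - 1}"
  have "finite ?J" by (rule finite_subset[of _ "{..M}"]) auto
  moreover have "(\<lambda>S. card S - 1) ` ?A \<subseteq> ?J"
    using distinct_partition_card_le_Max distinct_partition_card_pos
    unfolding perimeter_def by fastforce
  ultimately have "h M = (\<Sum>j\<in>?J. \<Sum>S \<in> {S \<in> ?A. card S - 1 = j}. card S)"
    unfolding h_def by (rule sum.group[OF finite_distinct_partitions_perimeter, symmetric])
  also have "\<dots> = (\<Sum>j\<in>?J. (j + 1) * ((M - j - 1) choose j))"
  proof (rule sum.cong[OF refl])
    fix j assume "j \<in> ?J"
    with assms have j: "j < M" by auto
    have "{S \<in> ?A. card S - 1 = j} = subsets_with_max (M - j) (Suc j)"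
      using distinct_partitions_perimeter_card_eq[OF j] distinct_partition_card_pos by force
    moreover have "card (subsets_with_max (M - j) (Suc j)) = (M - j - 1) choose j"
      using j by (simp add: card_subsets_with_max)
    ultimately show "(\<Sum>S \<in> {S \<in> ?A. card S - 1 = j}. card S) = (j + 1) * ((M - j - 1) choose j)"
      by (simp add: subsets_with_max_def)
  qed
  finally show ?thesis .
qed

end
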